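(* Let $A(x)=\sin^2(2\pi x)$, $\hat m(A)=\frac{A(1/3)+A(2/3)}{2}$, $\eta(x)=\frac{x}{4}+\frac12$, $F(x)=A(\frac{x}{2})+A(\frac{x}{4}+\frac12)$, and $V_2(x)=\lim_{n\to\infty}\sum_{i=0}^{n-1}[F(\eta^i(x))-2\hat m(A)]$ for $x\in[0,1]$. Then the function $V_1(x)=V_2\left(\frac{x+1}{2}\right)+A\left(\frac{x+1}{2}\right)-\hat m(A)$ satisfies, for all $x\in[0,1]$, $$V_1(x/2)+A(x/2)=V_2(x)+\hat m(A).$$
   Context: $\eta^i$ denotes the $i$-th iterate of $\eta$, with $\eta^0$ the identity. *)

theory Defs
  imports Complex_Main
begin

definition A :: "real \<Rightarrow> real" where
  "A x = (sin (2 * pi * x))^2"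

definition mhat :: real where
  "mhat = (A (1/3) + A (2/3)) / 2"

definition eta :: "real \<Rightarrow> real" where
  "eta x = x / 4 + 1/2"

definition F :: "real \<Rightarrow> real" where
  "F x = A (x / 2) + A (x / 4 + 1/2)"

definition V2 :: "real \<Rightarrow> real" where
  "V2 x = lim (\<lambda>n. \<Sum>i<n. F ((eta ^^ i) x) - 2 * mhat)"

definition V1 :: "real \<Rightarrow> real" where
  "V1 x = V2 ((x + 1) / 2) + A ((x + 1) / 2) - mhat"

end

theory Submission
  imports Defs
begin

text \<open>The map \<open>eta\<close> is a contraction with ratio 1/4 and fixed point 2/3, and
  \<open>F (2/3) = A (1/3) + A (2/3) = 2 * mhat\<close>.  Since \<open>A\<close> is Lipschitz, the terms
  \<open>F (eta\<^sup>i x) - 2 * mhat\<close> decay geometrically, so the series defining \<open>V2\<close>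
  converges, and splitting off its first term gives
  \<open>V2 x = F x - 2 * mhat + V2 (eta x)\<close>.  As \<open>((x/2) + 1)/2 = eta x\<close>, this is the
  claimed identity; it holds for every real \<open>x\<close>, not only on [0,1].\<close>

lemma abs_sin_diff_le:
  fixes a b :: real
  shows "\<bar>sin a - sin b\<bar> \<le> \<bar>a - b\<bar>"
proof -
  have "\<bar>sin a - sin b\<bar> = 2 * \<bar>sin ((a - b) / 2)\<bar> * \<bar>cos ((a + b) / 2)\<bar>"
    by (simp add: sin_diff_sin abs_mult)
  also have "\<dots> \<le> 2 * \<bar>(a - b) / 2\<bar> * 1"
    by (intro mult_mono abs_sin_x_le_abs_x) auto
  finally show ?thesis by simp
qed

lemma abs_sin_square_diff_le:
  fixes a b :: real
  shows "\<bar>(sin a)\<^sup>2 - (sin b)\<^sup>2\<bar> \<le> 2 * \<bar>a - b\<bar>"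
proof -
  have "\<bar>(sin a)\<^sup>2 - (sin b)\<^sup>2\<bar> = \<bar>sin a - sin b\<bar> * \<bar>sin a + sin b\<bar>"
    by (simp add: power2_eq_square ring_distribs flip: abs_mult)
  also have "\<dots> \<le> \<bar>a - b\<bar> * 2"
  proof (rule mult_mono)
    show "\<bar>sin a + sin b\<bar> \<le> 2"
      using abs_sin_le_one[of a] abs_sin_le_one[of b] by linarith
  qed (simp_all add: abs_sin_diff_le)
  finally show ?thesis by simp
qed

lemma abs_A_diff_le: "\<bar>A u - A v\<bar> \<le> 4 * pi * \<bar>u - v\<bar>"
proof -
  have "\<bar>A u - A v\<bar> \<le> 2 * \<bar>2 * pi * u - 2 * pi * v\<bar>"
    unfolding A_def by (rule abs_sin_square_diff_le)
  also have "\<bar>2 * pi * u - 2 * pi * v\<bar> = 2 * pi * \<bar>u - v\<bar>"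
    by (simp add: abs_mult flip: right_diff_distrib)
  finally show ?thesis by simp
qed

lemma abs_F_diff_le: "\<bar>F u - F v\<bar> \<le> 3 * pi * \<bar>u - v\<bar>"
proof -
  have "\<bar>F u - F v\<bar> \<le> \<bar>A (u / 2) - A (v / 2)\<bar> + \<bar>A (u / 4 + 1/2) - A (v / 4 + 1/2)\<bar>"
    unfolding F_def by linarith
  also have "\<dots> \<le> 4 * pi * \<bar>u / 2 - v / 2\<bar> + 4 * pi * \<bar>(u / 4 + 1/2) - (v / 4 + 1/2)\<bar>"
    by (intro add_mono abs_A_diff_le)
  also have "\<dots> = 3 * pi * \<bar>u - v\<bar>"
    by (simp add: abs_minus_commute flip: diff_divide_distrib)
  finally show ?thesis .
qed

lemma F_two_thirds: "F (2/3) = 2 * mhat"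
  by (simp add: F_def mhat_def)

lemma eta_contraction: "\<bar>eta y - 2/3\<bar> = \<bar>y - 2/3\<bar> / 4"
  by (simp add: eta_def flip: abs_divide) (simp add: field_simps)

lemma abs_funpow_contraction_le:
  fixes f :: "real \<Rightarrow> real"
  assumes "\<And>y. \<bar>f y - p\<bar> \<le> q * \<bar>y - p\<bar>" and "0 \<le> q"
  shows "\<bar>(f ^^ i) x - p\<bar> \<le> q ^ i * \<bar>x - p\<bar>"
proof (induction i)
  case (Suc i)
  have "\<bar>(f ^^ Suc i) x - p\<bar> \<le> q * \<bar>(f ^^ i) x - p\<bar>"
    using assms(1) by simp
  also have "\<dots> \<le> q * (q ^ i * \<bar>x - p\<bar>)"
    using Suc.IH assms(2) by (rule mult_left_mono)
  finally show ?case by simp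
qed simp

lemma summable_funpow_contraction:
  fixes f g :: "real \<Rightarrow> real"
  assumes f: "\<And>y. \<bar>f y - p\<bar> \<le> q * \<bar>y - p\<bar>" "0 \<le> q" "q < 1"
    and g: "\<And>y. \<bar>g y\<bar> \<le> C * \<bar>y - p\<bar>"
  shows "summable (\<lambda>i. g ((f ^^ i) x))"
proof (rule summable_comparison_test')
  show "summable (\<lambda>i. C * \<bar>x - p\<bar> * q ^ i)"
    using f(2,3) by (intro summable_mult summable_geometric) auto
  have "C \<ge> 0"
    using g[of "p + 1"] by simp
  fix i
  have "norm (g ((f ^^ i) x)) \<le> C * \<bar>(f ^^ i) x - p\<bar>"
    using g by simp
  also have "\<dots> \<le> C * (q ^ i * \<bar>x - p\<bar>)"
    using \<open>C \<ge> 0\<close> abs_funpow_contraction_le[OF f(1,2)] by (rule mult_left_mono[rotated])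
  finally show "norm (g ((f ^^ i) x)) \<le> C * \<bar>x - p\<bar> * q ^ i"
    by (simp add: algebra_simps)
qed

lemma lim_funpow_sum_unfold:
  fixes g :: "'a \<Rightarrow> 'b::real_normed_vector"
  assumes "summable (\<lambda>i. g ((f ^^ i) x))"
  shows "lim (\<lambda>n. \<Sum>i<n. g ((f ^^ i) x)) = g x + lim (\<lambda>n. \<Sum>i<n. g ((f ^^ i) (f x)))"
proof -
  have "(\<Sum>i. g ((f ^^ i) (f x))) = (\<Sum>i. g ((f ^^ i) x)) - g x"
    using suminf_split_head[OF assms] by (simp add: funpow_Suc_right del: funpow.simps)
  then show ?thesis
    by (simp flip: suminf_eq_lim)
qed

lemma V2_unfold: "V2 x = F x - 2 * mhat + V2 (eta x)"
proof -
  have "summable (\<lambda>i. F ((eta ^^ i) x) - 2 * mhat)"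
  proof (rule summable_funpow_contraction)
    show "\<bar>eta y - 2/3\<bar> \<le> 1/4 * \<bar>y - 2/3\<bar>" for y
      by (simp add: eta_contraction)
    show "\<bar>F y - 2 * mhat\<bar> \<le> 3 * pi * \<bar>y - 2/3\<bar>" for y
      using abs_F_diff_le[of y "2/3"] by (simp add: F_two_thirds)
  qed auto
  then show ?thesis
    unfolding V2_def by (rule lim_funpow_sum_unfold)
qed

theorem mainTheorem9:
  fixes x :: real
  assumes "0 \<le> x" and "x \<le> 1"
  shows "V1 (x / 2) + A (x / 2) = V2 x + mhat"
proof -
  have "(x / 2 + 1) / 2 = eta x"
    by (simp add: eta_def field_simps)
  then show ?thesis
    unfolding V1_def V2_unfold[of x] F_def by (simp flip: eta_def)
qed

end
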